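(* Let $p\in\mathbb{R}$. Every $z=(v,m,\sigma,e)\in Z$ satisfying $m\ne(e+p)v$, $2e-|v|^2>0$ and $M(z)=0$ belongs to $K^{\Lambda,1}$.
   Context: $\mathcal S_0^{2\times2}$ is the space of traceless symmetric $2\times2$ matrices, $Z:=\mathbb{R}^2\times\mathbb{R}^2\times\mathcal S_0^{2\times2}\times\mathbb{R}$, $K:=\{z\in Z: v\otimes v-\sigma=e\,\mathrm{Id},\ m=(e+p)v\}$. The wave cone is $\Lambda=\{\bar z=(\bar v,\bar m,\bar\sigma,\bar e)\in Z:\ (\bar v,\bar e)\neq0\text{ and there is }0\ne(\xi,c)\in\mathbb{R}^2\times\mathbb{R}\text{ with }(\bar\sigma+\bar e\,\mathrm{Id})\xi+c\bar v=0,\ \bar v\cdot\xi=0,\ \bar m\cdot\xi+c\bar e=0\}$. For a set $A\subset Z$, $A^{\Lambda,1}:=A\cup\{sz_1+(1-s)z_2: z_1,z_2\in A,\ s\in[0,1],\ z_1-z_2\in\Lambda\}$, and $K^{\Lambda,1}$ is this for $A=K$. For $z$ with $m\ne(e+p)v$ set $\eta(z):=\frac{m-(e+p)v}{|m-(e+p)v|}$ and $M(z):=v\otimes v-\sigma-e\,\mathrm{Id}+(2e-|v|^2)\eta(z)\otimes\eta(z)$. *)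

theory Defs
  imports "HOL-Analysis.Analysis"
begin

type_synonym zpt = "(real^2) \<times> (real^2) \<times> (real^2^2) \<times> real"

definition outer :: "real^2 \<Rightarrow> real^2 \<Rightarrow> real^2^2" where
  "outer u w = (\<chi> i j. u$i * w$j)"

definition Zset :: "zpt set" where
  "Zset = {(v,m,\<sigma>,e). transpose \<sigma> = \<sigma> \<and> trace \<sigma> = 0}"

definition Kset :: "real \<Rightarrow> zpt set" where
  "Kset p = {(v,m,\<sigma>,e) \<in> Zset. outer v v - \<sigma> = e *\<^sub>R mat 1 \<and> m = (e + p) *\<^sub>R v}"

definition wave_cone :: "zpt set" where
  "wave_cone = {(v,m,\<sigma>,e) \<in> Zset. (v,e) \<noteq> 0 \<and>
     (\<exists>(\<xi>::real^2) (c::real). (\<xi>,c) \<noteq> 0 \<and>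
        (\<sigma> + e *\<^sub>R mat 1) *v \<xi> + c *\<^sub>R v = 0 \<and> v \<bullet> \<xi> = 0 \<and> m \<bullet> \<xi> + c * e = 0)}"

definition lam1 :: "zpt set \<Rightarrow> zpt set" where
  "lam1 A = A \<union> {s *\<^sub>R z1 + (1 - s) *\<^sub>R z2 | s z1 z2.
      z1 \<in> A \<and> z2 \<in> A \<and> s \<in> {0..1} \<and> z1 - z2 \<in> wave_cone}"

definition eta :: "real \<Rightarrow> zpt \<Rightarrow> real^2" where
  "eta p z = (case z of (v,m,\<sigma>,e) \<Rightarrow> (1 / norm (m - (e + p) *\<^sub>R v)) *\<^sub>R (m - (e + p) *\<^sub>R v))"

definition Mmat :: "real \<Rightarrow> zpt \<Rightarrow> real^2^2" where
  "Mmat p z = (case z of (v,m,\<sigma>,e) \<Rightarrow>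
     outer v v - \<sigma> - e *\<^sub>R mat 1 + (2 * e - (norm v)\<^sup>2) *\<^sub>R outer (eta p z) (eta p z))"

end

theory Submission
  imports Defs
begin

text \<open>Write \<open>r = 2e - |v|\<^sup>2\<close> and \<open>\<eta> = \<eta>(z)\<close>. Then \<open>M(z) = 0\<close> says \<open>\<sigma> = v \<otimes> v - e Id + r \<eta> \<otimes> \<eta>\<close>,
  and \<open>m = (e + p) v + \<mu> \<eta>\<close> for some \<open>\<mu>\<close>. The set \<open>K\<close> is a graph over the velocity (its trace
  condition forces \<open>e = |v|\<^sup>2/2\<close>), and two points of \<open>K\<close> with distinct velocities \<open>x, y\<close> always
  differ by an element of the wave cone: take \<open>\<xi> \<bottom> x - y\<close> and \<open>c = -x \<cdot> \<xi>\<close>. So it suffices to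
  write \<open>z\<close> as a convex combination with weights \<open>s, 1 - s\<close> of the points of \<open>K\<close> with velocities
  \<open>v + (1 - s) l \<eta>\<close> and \<open>v - s l \<eta>\<close>. Matching \<open>e\<close> and \<open>m\<close> amounts to \<open>s (1 - s) l\<^sup>2 = r\<close>
  and \<open>(1 - 2s) l = 2 (\<mu>/r - v \<cdot> \<eta>)\<close>, which is solvable with \<open>0 < s < 1\<close> because \<open>r > 0\<close>;
  the \<open>\<sigma>\<close>-components then match automatically.\<close>

lemma vec2_eq_iff: "(x::real^2) = y \<longleftrightarrow> x$1 = y$1 \<and> x$2 = y$2"
  by (simp add: vec_eq_iff forall_2)

lemma mat2_eq_iff: "(A::real^2^2) = B \<longleftrightarrow>
    A$1$1 = B$1$1 \<and> A$1$2 = B$1$2 \<and> A$2$1 = B$2$1 \<and> A$2$2 = B$2$2"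
  by (simp add: vec_eq_iff forall_2)

lemmas components_2 = outer_def mat_def matrix_vector_mult_def inner_vec_def
  transpose_def trace_def sum_2

lemma norm_power2_2: "(norm (x::real^2))\<^sup>2 = x$1 * x$1 + x$2 * x$2"
  by (simp add: power2_norm_eq_inner components_2)

definition Kpoint :: "real \<Rightarrow> real^2 \<Rightarrow> zpt" where
  "Kpoint p x = (let e = (norm x)\<^sup>2 / 2 in (x, (e + p) *\<^sub>R x, outer x x - e *\<^sub>R mat 1, e))"

lemma Kpoint_in_Kset: "Kpoint p x \<in> Kset p"
  by (simp add: Kpoint_def Kset_def Zset_def Let_def mat2_eq_iff components_2 norm_power2_2)

lemma outer_mult_vector: "outer x y *v z = (y \<bullet> z) *\<^sub>R x"
  by (simp add: vec2_eq_iff components_2 algebra_simps)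

lemma Kpoint_diff_in_wave_cone:
  assumes "x \<noteq> y"
  shows "Kpoint p x - Kpoint p y \<in> wave_cone"
proof -
  define \<xi> :: "real^2" where "\<xi> = (\<chi> i. if i = 1 then y$2 - x$2 else x$1 - y$1)"
  define c where "c = - (x \<bullet> \<xi>)"
  have \<xi>_components: "\<xi>$1 = y$2 - x$2" "\<xi>$2 = x$1 - y$1"
    by (simp_all add: \<xi>_def)
  have same_projection: "y \<bullet> \<xi> = x \<bullet> \<xi>"
    by (simp add: components_2 \<xi>_components algebra_simps)
  have "(\<xi>, c) \<noteq> 0"
    using assms by (auto simp: zero_prod_def vec2_eq_iff \<xi>_components)
  moreover have "Kpoint p x - Kpoint p y \<in> Zset"
    by (simp add: Kpoint_def Zset_def Let_def mat2_eq_iff components_2 norm_power2_2 field_simps)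
  moreover have "(x - y, (norm x)\<^sup>2 / 2 - (norm y)\<^sup>2 / 2) \<noteq> 0"
    using assms by (simp add: zero_prod_def)
  moreover have "(outer x x - outer y y) *v \<xi> + c *\<^sub>R (x - y) = 0"
    by (simp add: outer_mult_vector same_projection c_def algebra_simps)
  moreover have "(x - y) \<bullet> \<xi> = 0"
    by (simp add: inner_diff_left same_projection)
  moreover have "(((norm x)\<^sup>2 / 2 + p) *\<^sub>R x - ((norm y)\<^sup>2 / 2 + p) *\<^sub>R y) \<bullet> \<xi>
      + c * ((norm x)\<^sup>2 / 2 - (norm y)\<^sup>2 / 2) = 0"
    by (simp add: same_projection c_def algebra_simps)
  ultimately show ?thesis
    unfolding wave_cone_def Kpoint_def Let_def
    by (auto simp: algebra_simps intro!: exI[of _ \<xi>] exI[of _ c])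
qed

lemma Kpoint_segment_in_lam1:
  assumes "x \<noteq> y" "s \<in> {0..1}"
  shows "s *\<^sub>R Kpoint p x + (1 - s) *\<^sub>R Kpoint p y \<in> lam1 (Kset p)"
  using assms Kpoint_in_Kset Kpoint_diff_in_wave_cone unfolding lam1_def by blast

lemma norm_add_scaleR_unit_power2:
  assumes "norm \<eta> = 1"
  shows "(norm (v + t *\<^sub>R \<eta>))\<^sup>2 = (norm v)\<^sup>2 + 2 * t * (v \<bullet> \<eta>) + t\<^sup>2"
proof -
  have "\<eta> \<bullet> \<eta> = 1"
    using assms by (simp add: norm_eq_1)
  then show ?thesis
    unfolding power2_norm_eq_inner
    by (simp add: inner_commute power2_eq_square algebra_simps)
qed

lemma Kpoint_combination:
  fixes s l :: real and \<eta> v :: "real^2"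
  assumes "norm \<eta> = 1"
  defines "e \<equiv> ((norm v)\<^sup>2 + s * (1 - s) * l\<^sup>2) / 2"
  shows "s *\<^sub>R Kpoint p (v + ((1 - s) * l) *\<^sub>R \<eta>) + (1 - s) *\<^sub>R Kpoint p (v - (s * l) *\<^sub>R \<eta>) =
    (v, (e + p) *\<^sub>R v + (s * (1 - s) * l\<^sup>2 * (v \<bullet> \<eta> + (1 - 2 * s) * l / 2)) *\<^sub>R \<eta>,
     outer v v - e *\<^sub>R mat 1 + (s * (1 - s) * l\<^sup>2) *\<^sub>R outer \<eta> \<eta>, e)"
proof -
  have norm1: "(norm (v + ((1 - s) * l) *\<^sub>R \<eta>))\<^sup>2
      = (norm v)\<^sup>2 + 2 * ((1 - s) * l) * (v \<bullet> \<eta>) + ((1 - s) * l)\<^sup>2"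
    using norm_add_scaleR_unit_power2[OF assms(1)] .
  have norm2: "(norm (v - (s * l) *\<^sub>R \<eta>))\<^sup>2
      = (norm v)\<^sup>2 - 2 * (s * l) * (v \<bullet> \<eta>) + (s * l)\<^sup>2"
    using norm_add_scaleR_unit_power2[OF assms(1), of v "- (s * l)"] by simp
  show ?thesis
    unfolding Kpoint_def Let_def norm1 norm2 e_def
    by (simp add: vec2_eq_iff mat2_eq_iff components_2 power2_eq_square field_simps)
qed

lemma Mmat_eq_0_decomposition:
  assumes "m \<noteq> (e + p) *\<^sub>R v" "Mmat p (v, m, \<sigma>, e) = 0"
  obtains \<mu> \<eta> where "norm \<eta> = 1" "m = (e + p) *\<^sub>R v + \<mu> *\<^sub>R \<eta>"
    "\<sigma> = outer v v - e *\<^sub>R mat 1 + (2 * e - (norm v)\<^sup>2) *\<^sub>R outer \<eta> \<eta>"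
proof
  let ?d = "m - (e + p) *\<^sub>R v"
  show "norm (eta p (v, m, \<sigma>, e)) = 1"
    using assms(1) by (simp add: eta_def)
  show "m = (e + p) *\<^sub>R v + norm ?d *\<^sub>R eta p (v, m, \<sigma>, e)"
    using assms(1) by (simp add: eta_def)
  show "\<sigma> = outer v v - e *\<^sub>R mat 1
      + (2 * e - (norm v)\<^sup>2) *\<^sub>R outer (eta p (v, m, \<sigma>, e)) (eta p (v, m, \<sigma>, e))"
    using assms(2) by (simp add: Mmat_def algebra_simps)
qed

lemma segment_parameters_exist:
  fixes r d :: real
  assumes "r > 0"
  obtains s l where "0 < s" "s < 1" "l > 0" "s * (1 - s) * l\<^sup>2 = r" "(1 - 2 * s) * l = d"
proof
  define l where "l = sqrt (d\<^sup>2 + 4 * r)"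
  have "\<bar>d\<bar> < l"
    using assms real_sqrt_less_mono[of "d\<^sup>2" "d\<^sup>2 + 4 * r"] by (simp add: l_def)
  then show "l > 0" "0 < (l - d) / (2 * l)" "(l - d) / (2 * l) < 1"
    by (auto simp: field_simps)
  have "(l - d) / (2 * l) * (1 - (l - d) / (2 * l)) * l\<^sup>2 = (l\<^sup>2 - d\<^sup>2) / 4"
    using \<open>l > 0\<close> by (simp add: field_simps power2_eq_square)
  also have "\<dots> = r"
    using assms by (simp add: l_def)
  finally show "(l - d) / (2 * l) * (1 - (l - d) / (2 * l)) * l\<^sup>2 = r" .
  from \<open>l > 0\<close> show "(1 - 2 * ((l - d) / (2 * l))) * l = d"
    by (simp add: field_simps)
qed

theorem lemma2p6:
  fixes p e :: real and v m :: "real^2" and \<sigma> :: "real^2^2"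
  assumes "(v, m, \<sigma>, e) \<in> Zset"
    and "m \<noteq> (e + p) *\<^sub>R v"
    and "2 * e - (norm v)\<^sup>2 > 0"
    and "Mmat p (v, m, \<sigma>, e) = 0"
  shows "(v, m, \<sigma>, e) \<in> lam1 (Kset p)"
proof -
  obtain \<mu> \<eta> where \<eta>: "norm \<eta> = 1"
    and m: "m = (e + p) *\<^sub>R v + \<mu> *\<^sub>R \<eta>"
    and \<sigma>: "\<sigma> = outer v v - e *\<^sub>R mat 1 + (2 * e - (norm v)\<^sup>2) *\<^sub>R outer \<eta> \<eta>"
    using Mmat_eq_0_decomposition[OF assms(2,4)] by metis
  define r where "r = 2 * e - (norm v)\<^sup>2"
  obtain s l where "0 < s" "s < 1" "l > 0" and r: "s * (1 - s) * l\<^sup>2 = r"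
    and d: "(1 - 2 * s) * l = 2 * (\<mu> / r - v \<bullet> \<eta>)"
    using segment_parameters_exist assms(3) r_def by metis
  have "\<mu> = s * (1 - s) * l\<^sup>2 * (v \<bullet> \<eta> + (1 - 2 * s) * l / 2)"
    unfolding r d using assms(3) r_def by (simp add: field_simps)
  moreover have "2 * e - (norm v)\<^sup>2 = s * (1 - s) * l\<^sup>2"
    unfolding r r_def ..
  ultimately have "(v, m, \<sigma>, e) =
      s *\<^sub>R Kpoint p (v + ((1 - s) * l) *\<^sub>R \<eta>) + (1 - s) *\<^sub>R Kpoint p (v - (s * l) *\<^sub>R \<eta>)"
    using Kpoint_combination[OF \<eta>, where s = s and l = l and v = v and p = p] m \<sigma> by simp
  moreover have "(v + ((1 - s) * l) *\<^sub>R \<eta>) - (v - (s * l) *\<^sub>R \<eta>) = l *\<^sub>R \<eta>"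
    by (simp add: algebra_simps)
  then have "v + ((1 - s) * l) *\<^sub>R \<eta> \<noteq> v - (s * l) *\<^sub>R \<eta>"
    using \<open>l > 0\<close> \<eta> by auto
  ultimately show ?thesis
    using Kpoint_segment_in_lam1 \<open>0 < s\<close> \<open>s < 1\<close> by simp
qed

end
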